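(* Fix $(u_\pm,v_\pm)$ with $v_\pm>0$ and $u_->u_+$. For $\epsilon_1,\epsilon_2>0$ let $(u_*^{\epsilon_1\epsilon_2},v_*^{\epsilon_1\epsilon_2})$ be the intermediate state of the two-shock Riemann solution of the perturbed Brio system with data $(u_\pm,v_\pm)$. Then $\lim_{\epsilon_1,\epsilon_2\to0}v_*^{\epsilon_1\epsilon_2}=+\infty$.
   Context: Perturbed Brio system: $u_t+(\tfrac12u^2+\tfrac12\epsilon_1v^2)_x=0$, $v_t+(uv-\epsilon_2v)_x=0$, $\epsilon_1,\epsilon_2>0$, $v>0$, with Riemann data $(u,v)(0,x)=(u_-,v_-)$ for $x<0$, $(u_+,v_+)$ for $x>0$. A two-shock Riemann solution is one with an intermediate state $(u_*,v_* )$, $v_*>\max(v_-,v_+)$, $u_+<u_*<u_-$, such that $$u_*=u_-+(v_*-v_-)\frac{\epsilon_2-\sqrt{\epsilon_2^2+4\epsilon_1(v_*+v_-)^2}}{v_*+v_-},\qquad u_+=u_*+(v_+-v_* )\frac{\epsilon_2+\sqrt{\epsilon_2^2+4\epsilon_1(v_*+v_+)^2}}{v_*+v_+},$$ with shock speeds $\sigma_1=u_-+\frac{v_*(u_*-u_-)}{v_*-v_-}-\epsilon_2$ and $\sigma_2=u_++\frac{v_*(u_+-u_* )}{v_+-v_*}-\epsilon_2$; the solution equals $(u_-,v_-)$ for $x/t<\sigma_1$, $(u_*,v_* )$ for $\sigma_1<x/t<\sigma_2$, $(u_+,v_+)$ for $x/t>\sigma_2$. The limit $\epsilon_1,\epsilon_2\to0$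 is taken over parameters for which this two-shock solution exists. *)

theory Defs
  imports Complex_Main
begin

definition two_shock_state ::
  "real \<Rightarrow> real \<Rightarrow> real \<Rightarrow> real \<Rightarrow> real \<Rightarrow> real \<Rightarrow> real \<Rightarrow> real \<Rightarrow> bool" where
  "two_shock_state e1 e2 um vm up vp us vs \<longleftrightarrow>
     vs > max vm vp \<and> up < us \<and> us < um \<and>
     us = um + (vs - vm) * (e2 - sqrt (e2\<^sup>2 + 4 * e1 * (vs + vm)\<^sup>2)) / (vs + vm) \<and>
     up = us + (vp - vs) * (e2 + sqrt (e2\<^sup>2 + 4 * e1 * (vs + vp)\<^sup>2)) / (vs + vp)"

end

theory Submission
  imports Defs
begin

text \<open>Adding the jumps across the two shocks, \<open>u\<^sub>- - u\<^sub>+ = (u\<^sub>- - u\<^sub>*) + (u\<^sub>* - u\<^sub>+)\<close>, and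
  bounding each square root by \<open>\<epsilon>\<^sub>2 + 2\<surd>\<epsilon>\<^sub>1 (v\<^sub>* + v\<^sub>\<plusminus>)\<close> gives
  \<open>u\<^sub>- - u\<^sub>+ \<le> 2\<epsilon>\<^sub>2 + 4\<surd>\<epsilon>\<^sub>1 v\<^sub>*\<close>. Since the left-hand side is a fixed positive number,
  \<open>v\<^sub>*\<close> is at least of order \<open>1/\<surd>\<epsilon>\<^sub>1\<close> once \<open>\<epsilon>\<^sub>2\<close> is small.\<close>

lemma sqrt_sq_plus_sq_le:
  fixes e1 e2 w :: real
  assumes "0 \<le> e1" "0 \<le> e2" "0 \<le> w"
  shows "sqrt (e2\<^sup>2 + 4 * e1 * w\<^sup>2) \<le> e2 + 2 * sqrt e1 * w"
proof -
  have "sqrt (4 * e1 * w\<^sup>2) = 2 * sqrt e1 * w"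
    using assms by (simp add: real_sqrt_mult)
  moreover have "sqrt (e2\<^sup>2) = e2"
    using assms by simp
  ultimately show ?thesis
    using sqrt_add_le_add_sqrt[of "e2\<^sup>2" "4 * e1 * w\<^sup>2"] assms by simp
qed

lemma left_shock_jump_le:
  fixes e1 e2 d w :: real
  assumes "0 \<le> e1" "0 \<le> e2" "0 \<le> d" "d \<le> w" "0 < w"
  shows "d * (sqrt (e2\<^sup>2 + 4 * e1 * w\<^sup>2) - e2) / w \<le> 2 * sqrt e1 * d"
proof -
  have "d * (sqrt (e2\<^sup>2 + 4 * e1 * w\<^sup>2) - e2) \<le> d * (2 * sqrt e1 * w)"
    using sqrt_sq_plus_sq_le[of e1 e2 w] assms by (intro mult_left_mono) auto
  then show ?thesis
    using assms by (simp add: divide_le_eq algebra_simps)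
qed

lemma right_shock_jump_le:
  fixes e1 e2 d w :: real
  assumes "0 \<le> e1" "0 \<le> e2" "0 \<le> d" "d \<le> w" "0 < w"
  shows "d * (e2 + sqrt (e2\<^sup>2 + 4 * e1 * w\<^sup>2)) / w \<le> 2 * e2 + 2 * sqrt e1 * d"
proof -
  have "d * (e2 + sqrt (e2\<^sup>2 + 4 * e1 * w\<^sup>2)) \<le> d * (2 * e2 + 2 * sqrt e1 * w)"
    using sqrt_sq_plus_sq_le[of e1 e2 w] assms by (intro mult_left_mono) auto
  also have "\<dots> \<le> (2 * e2 + 2 * sqrt e1 * d) * w"
    using mult_right_mono[of d w e2] assms by (simp add: algebra_simps)
  finally show ?thesis
    using assms by (simp add: divide_le_eq)
qed

lemma two_shock_state_jump_le:
  assumes "0 < e1" "0 < e2" "0 < vm" "0 < vp"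
    and "two_shock_state e1 e2 um vm up vp us vs"
  shows "um - up \<le> 2 * e2 + 4 * sqrt e1 * vs"
proof -
  have vs: "vm < vs" "vp < vs"
    using assms(5) unfolding two_shock_state_def by auto
  have us: "um - us = (vs - vm) * (sqrt (e2\<^sup>2 + 4 * e1 * (vs + vm)\<^sup>2) - e2) / (vs + vm)"
    using assms(3-5) vs unfolding two_shock_state_def by (simp add: field_simps)
  have up: "us - up = (vs - vp) * (e2 + sqrt (e2\<^sup>2 + 4 * e1 * (vs + vp)\<^sup>2)) / (vs + vp)"
    using assms(3-5) vs unfolding two_shock_state_def by (simp add: field_simps)
  have "um - us \<le> 2 * sqrt e1 * (vs - vm)"
    unfolding us using assms vs by (intro left_shock_jump_le) auto
  moreover have "us - up \<le> 2 * e2 + 2 * sqrt e1 * (vs - vp)"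
    unfolding up using assms vs by (intro right_shock_jump_le) auto
  moreover have "0 \<le> sqrt e1 * vm" "0 \<le> sqrt e1 * vp"
    using assms by auto
  ultimately show ?thesis
    by (simp add: algebra_simps)
qed

theorem lemma5p1:
  fixes um vm up vp :: real
  assumes "vm > 0" and "vp > 0" and "um > up"
  shows "\<forall>M::real. \<exists>\<delta>>0. \<forall>e1 e2 us vs.
           0 < e1 \<and> e1 < \<delta> \<and> 0 < e2 \<and> e2 < \<delta> \<and>
           two_shock_state e1 e2 um vm up vp us vs \<longrightarrow> vs > M"
proof
  fix M :: real
  define D where "D = um - up"
  define c where "c = D / (8 * (\<bar>M\<bar> + 1))"
  have "0 < D" "0 < c"
    using assms by (simp_all add: D_def c_def)
  show "\<exists>\<delta>>0. \<forall>e1 e2 us vs.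
           0 < e1 \<and> e1 < \<delta> \<and> 0 < e2 \<and> e2 < \<delta> \<and>
           two_shock_state e1 e2 um vm up vp us vs \<longrightarrow> vs > M"
  proof (intro exI[of _ "min (D / 4) (c\<^sup>2)"] conjI allI impI)
    show "0 < min (D / 4) (c\<^sup>2)"
      using \<open>0 < D\<close> \<open>0 < c\<close> by simp
    fix e1 e2 us vs
    assume h: "0 < e1 \<and> e1 < min (D / 4) (c\<^sup>2) \<and> 0 < e2 \<and> e2 < min (D / 4) (c\<^sup>2) \<and>
      two_shock_state e1 e2 um vm up vp us vs"
    then have "0 < vs"
      using assms by (auto simp: two_shock_state_def)
    have "sqrt e1 < c"
      using h \<open>0 < c\<close> real_sqrt_less_mono[of e1 "c\<^sup>2"] by simp
    have "e2 < D / 4"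
      using h by simp
    then have "D / 2 \<le> 4 * sqrt e1 * vs"
      using two_shock_state_jump_le[of e1 e2 vm vp um up us vs] h assms
      unfolding D_def by auto
    also have "\<dots> < 4 * c * vs"
      using \<open>sqrt e1 < c\<close> \<open>0 < vs\<close> by simp
    finally have "D * (\<bar>M\<bar> + 1) < D * vs"
      unfolding c_def by (simp add: field_simps)
    then show "M < vs"
      using \<open>0 < D\<close> by simp
  qed
qed

end
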